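(* Let $\Omega\subset\mathbb{R}^n$ be a bounded convex open set, and suppose there exists $R_0>0$ such that for every $z\in\partial\Omega$ there is a ball of radius at most $R_0$ containing $\Omega$ whose boundary contains $z$. Let $\rho\in(0,1)$ be a constant as described in the context, and let $r_0>0$. Let $x_0\in\Omega$ with $d_0:=d(x_0,\partial\Omega)$ satisfying $$d_0\le\min\Big(\frac{\rho^2}{16(1+4R_0)},\frac{r_0}{2},\frac14\Big),$$ let $v_0$ be a unit vector such that $x_\partial:=x_0+d_0v_0\in\partial\Omega$, set $\theta:=\sqrt{d_0/(6R_0)}$, and let $$E_\theta:=\{x\in\Omega\mid\langle x-x_0,-v_0\rangle\le\theta|x-x_0|\}.$$ Then $$E_\theta\subset B^n_{\sqrt{(1+4R_0)d_0}}(x_\partial)\subset B^n_{\rho/4}(x_\partial).$$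
   Context: $B^n_r(z)$ is the open ball in $\mathbb{R}^n$. The constant $\rho\in(0,1)$ (together with some $L>0$, $C_1>1$) is such that: for each $z\in\partial\Omega$, after a rotation and translation of coordinates, there is an $L$-Lipschitz function $\phi:B^{n-1}_\rho(0)\to(-C_1\rho,C_1\rho)$ with $\mathcal{C}_\rho\cap\Omega=\{(y',y_n)\in\mathcal{C}_\rho\mid y_n>\phi(y')\}$ and $z\in\mathcal{C}_{\rho/2}$, where $\mathcal{C}_r=B^{n-1}_r(0)\times(-2C_1r,2C_1r)$. *)

theory Defs
  imports "HOL-Analysis.Analysis"
begin

text \<open>Local coordinates after a rigid motion: origin p, unit "vertical" direction e.
  A point x has vertical coordinate y_n = (x - p) . e and horizontal coordinate
  y' = (x - p) - y_n e, which lies in the hyperplane orthogonal to e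
  (identified with R^(n-1)).\<close>

definition vcoord :: "'a::euclidean_space \<Rightarrow> 'a \<Rightarrow> 'a \<Rightarrow> real" where
  "vcoord p e x = (x - p) \<bullet> e"

definition hcoord :: "'a::euclidean_space \<Rightarrow> 'a \<Rightarrow> 'a \<Rightarrow> 'a" where
  "hcoord p e x = (x - p) - ((x - p) \<bullet> e) *\<^sub>R e"

definition cyl :: "'a::euclidean_space \<Rightarrow> 'a \<Rightarrow> real \<Rightarrow> real \<Rightarrow> 'a set" where
  "cyl p e C1 r = {x. norm (hcoord p e x) < r \<and> \<bar>vcoord p e x\<bar> < 2 * C1 * r}"

definition lip_graph_const :: "'a::euclidean_space set \<Rightarrow> real \<Rightarrow> bool" where
  "lip_graph_const \<Omega> \<rho> \<longleftrightarrow> 0 < \<rho> \<and> \<rho> < 1 \<and>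
     (\<exists>L C1. L > 0 \<and> C1 > 1 \<and>
       (\<forall>z\<in>frontier \<Omega>. \<exists>p e (\<phi> :: 'a \<Rightarrow> real).
          norm e = 1 \<and>
          L-lipschitz_on {y. y \<bullet> e = 0 \<and> norm y < \<rho>} \<phi> \<and>
          (\<forall>y. y \<bullet> e = 0 \<and> norm y < \<rho> \<longrightarrow> \<bar>\<phi> y\<bar> < C1 * \<rho>) \<and>
          cyl p e C1 \<rho> \<inter> \<Omega> = {x \<in> cyl p e C1 \<rho>. vcoord p e x > \<phi> (hcoord p e x)} \<and>
          z \<in> cyl p e C1 (\<rho> / 2)))"

end

theory Submission
  imports Defs
begin

text \<open>The inscribed ball \<open>B(x0, d0)\<close> lies in \<open>\<Omega>\<close>, hence in the ball \<open>B(c, r)\<close>, \<open>r \<le> R0\<close>,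
  that contains \<open>\<Omega>\<close> and touches \<open>\<partial>\<Omega>\<close> at \<open>x\<^sub>\<partial>\<close>. The two balls are internally tangent at \<open>x\<^sub>\<partial>\<close>,
  so \<open>c = x0 - (r - d0) v0\<close>. A point of \<open>E\<^sub>\<theta>\<close> lies both in \<open>B(c, r)\<close> and in the cone
  \<open>\<langle>x - x0, -v0\<rangle> \<le> \<theta> |x - x0|\<close>; with \<open>\<theta>\<^sup>2 = d0 / (6 R0)\<close> these two quadratic constraints force
  \<open>|x - x\<^sub>\<partial>|\<^sup>2 < (1 + 4 R0) d0\<close>.\<close>

lemma ball_infdist_frontier_subset:
  fixes S :: "'a::real_normed_vector set"
  assumes "x \<in> S"
  shows "ball x (infdist x (frontier S)) \<subseteq> S"
proof
  fix y assume y: "y \<in> ball x (infdist x (frontier S))"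
  show "y \<in> S"
  proof (rule ccontr)
    assume "y \<notin> S"
    then obtain z where z: "z \<in> closed_segment x y" "z \<in> frontier S"
      using connected_Int_frontier[of "closed_segment x y" S] assms by auto
    have "infdist x (frontier S) \<le> dist x z"
      using z(2) by (rule infdist_le)
    also have "\<dots> \<le> dist x y"
      using segment_bound1[OF z(1)] by (simp add: dist_norm norm_minus_commute)
    finally show False
      using y by simp
  qed
qed

text \<open>Equality in the triangle inequality \<open>dist c (x0 + d v) \<le> dist c x0 + d\<close> at the contact point.\<close>
lemma internally_tangent_ball_centre:
  fixes x0 c v :: "'a::euclidean_space"
  assumes "norm v = 1" and "0 < d"
    and "ball x0 d \<subseteq> ball c r" and "x0 + d *\<^sub>R v \<in> sphere c r"
  shows "c = x0 - (r - d) *\<^sub>R v"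
proof -
  define xb where "xb = x0 + d *\<^sub>R v"
  have dist_xb: "dist x0 xb = d"
    using assms(1,2) by (simp add: xb_def dist_norm)
  have "dist c x0 + d \<le> r"
    using assms(2,3) by (simp add: ball_subset_ball_iff dist_commute)
  moreover have "r = dist c xb"
    using assms(4) by (simp add: xb_def)
  moreover have "dist c xb \<le> dist c x0 + dist x0 xb"
    by (rule dist_triangle)
  ultimately have triangle_eq: "dist c xb = dist c x0 + dist x0 xb" and "dist c x0 = r - d"
    using dist_xb by linarith+
  have "norm (c - x0) *\<^sub>R (x0 - xb) = norm (x0 - xb) *\<^sub>R (c - x0)"
    using triangle_eq by (simp only: dist_triangle_eq)
  then have "(r - d) *\<^sub>R (x0 - xb) = d *\<^sub>R (c - x0)"
    using \<open>dist c x0 = r - d\<close> dist_xb by (simp add: dist_norm)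
  then have "d *\<^sub>R (c - x0) = d *\<^sub>R (- (r - d) *\<^sub>R v)"
    by (simp add: xb_def algebra_simps)
  then have "c - x0 = - (r - d) *\<^sub>R v"
    by (rule scaleR_left_imp_eq[rotated]) (use assms(2) in simp)
  then show ?thesis
    by (simp add: diff_eq_eq algebra_simps)
qed

lemma quadratic_root_bound:
  fixes u d e :: real
  assumes "0 \<le> u" and "0 < d" and "d \<le> 3" and "0 \<le> e"
    and "u\<^sup>2 < d * u / 3 + d\<^sup>2 / 3 + d ^ 3 * e / 3"
  shows "u < d * (1 + e)"
proof (rule ccontr)
  assume "\<not> u < d * (1 + e)"
  then have big: "d * (1 + e) \<le> u" by simp
  have "d\<^sup>2 * e \<le> 3 * d * e"
    using assms(2-4) by (simp add: power2_eq_square mult_right_mono)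
  then have "d / 3 + d\<^sup>2 * e / 3 \<le> (2 / 3 + e) * d"
    using assms(2) by (simp add: algebra_simps)
  also have "\<dots> \<le> (2 / 3 + e) * u"
    using big assms(2,4) by (intro mult_left_mono) (auto simp: algebra_simps intro: order_trans[OF _ big])
  finally have "d * (d / 3 + d\<^sup>2 * e / 3) \<le> d * ((2 / 3 + e) * u)"
    using assms(2) by simp
  then have "d * u / 3 + d\<^sup>2 / 3 + d ^ 3 * e / 3 \<le> d * (1 + e) * u"
    by (simp add: power2_eq_square power3_eq_cube algebra_simps)
  also have "\<dots> \<le> u\<^sup>2"
    using big assms(1) by (simp add: power2_eq_square mult_right_mono)
  finally show False
    using assms(5) by simp
qed

lemma cone_height_bound:
  fixes a t s d R :: real
  assumes "0 \<le> a" and "0 < d" and "d \<le> 3" and "0 \<le> s" and "s + d \<le> R"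
    and ball_ineq: "a\<^sup>2 + 2 * s * t < 2 * s * d + d\<^sup>2"
    and cone_ineq: "- t \<le> sqrt (d / (6 * R)) * a"
  shows "sqrt (d / (6 * R)) * a < d * (1 + 1 / (2 * R))"
proof -
  define \<theta> where "\<theta> = sqrt (d / (6 * R))"
  define u where "u = \<theta> * a"
  have R: "0 < R" using assms(2,4,5) by linarith
  have \<theta>: "0 < \<theta>" "\<theta>\<^sup>2 = d / (6 * R)"
    using R assms(2) by (simp_all add: \<theta>_def)
  have u: "0 \<le> u" "- t \<le> u"
    using \<theta> assms(1) cone_ineq by (simp_all add: u_def \<theta>_def)
  have "s * (- t) \<le> s * u"
    using u(2) assms(4) by (rule mult_left_mono)
  moreover have "s * u \<le> R * u" "s * d \<le> R * d"
    using u(1) assms(2,5) by (simp_all add: mult_right_mono)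
  ultimately have "a\<^sup>2 < 2 * R * u + 2 * R * d + d\<^sup>2"
    using ball_ineq by linarith
  then have "u\<^sup>2 < \<theta>\<^sup>2 * (2 * R * u + 2 * R * d + d\<^sup>2)"
    using \<theta>(1) by (simp add: u_def power_mult_distrib)
  also have "\<dots> = d * u / 3 + d\<^sup>2 / 3 + d ^ 3 * (1 / (2 * R)) / 3"
    unfolding \<theta>(2) using R by (simp add: field_simps power2_eq_square power3_eq_cube)
  finally have "u < d * (1 + 1 / (2 * R))"
    using u(1) assms(2,3) R by (intro quadratic_root_bound) auto
  then show ?thesis
    by (simp add: u_def \<theta>_def)
qed

lemma tangent_ball_cone_near_contact:
  fixes v w :: "'a::real_inner"
  assumes "norm v = 1" and "0 < d" and "d \<le> 3" and "0 \<le> s" and "s + d \<le> R"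
    and in_ball: "norm (w + s *\<^sub>R v) < s + d"
    and in_cone: "w \<bullet> (- v) \<le> sqrt (d / (6 * R)) * norm w"
  shows "(norm (w - d *\<^sub>R v))\<^sup>2 < (1 + 4 * R) * d"
proof -
  define a t where "a = norm w" and "t = w \<bullet> v"
  have R: "0 < R" using assms(2,4,5) by linarith
  have vv: "v \<bullet> v = 1" using assms(1) by (simp add: norm_eq_1)
  have "(norm (w + s *\<^sub>R v))\<^sup>2 = a\<^sup>2 + 2 * s * t + s\<^sup>2"
    unfolding a_def t_def power2_norm_eq_inner
    by (simp add: inner_add_left inner_add_right vv inner_commute algebra_simps power2_eq_square)
  moreover have "(norm (w + s *\<^sub>R v))\<^sup>2 < (s + d)\<^sup>2"
    using in_ball by (simp add: power_strict_mono)
  ultimately have ball_ineq: "a\<^sup>2 + 2 * s * t < 2 * s * d + d\<^sup>2"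
    by (simp add: power2_eq_square algebra_simps)
  have height: "- t < d * (1 + 1 / (2 * R))"
    using cone_height_bound[OF _ assms(2-5) ball_ineq] in_cone
    by (fastforce simp: a_def t_def)
  have "(norm (w - d *\<^sub>R v))\<^sup>2 = a\<^sup>2 - 2 * d * t + d\<^sup>2"
    unfolding a_def t_def power2_norm_eq_inner
    by (simp add: inner_diff_left inner_diff_right vv inner_commute algebra_simps power2_eq_square)
  also have "\<dots> < 2 * (s + d) * (d - t)"
    using ball_ineq by (simp add: power2_eq_square algebra_simps)
  also have "\<dots> \<le> (1 + 4 * R) * d"
  proof (cases "d \<le> t")
    case True
    then have "2 * (s + d) * (d - t) \<le> 0"
      using assms(2,4) by (simp add: mult_nonneg_nonpos)
    also have "\<dots> \<le> (1 + 4 * R) * d"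
      using R assms(2) by simp
    finally show ?thesis .
  next
    case False
    then have "2 * (s + d) * (d - t) \<le> 2 * R * (d - t)"
      using assms(5) by (intro mult_right_mono) auto
    also have "\<dots> \<le> 2 * R * (d + d * (1 + 1 / (2 * R)))"
      using height R by simp
    also have "\<dots> = (1 + 4 * R) * d"
      using R by (simp add: field_simps)
    finally show ?thesis .
  qed
  finally show ?thesis .
qed

lemma tangent_ball_Int_cone_subset_ball:
  fixes x0 v c :: "'a::euclidean_space"
  assumes "norm v = 1" and "0 < d" and "d \<le> 3" and "r \<le> R"
    and "ball x0 d \<subseteq> ball c r" and "x0 + d *\<^sub>R v \<in> sphere c r"
  shows "ball c r \<inter> {x. (x - x0) \<bullet> (- v) \<le> sqrt (d / (6 * R)) * norm (x - x0)}
           \<subseteq> ball (x0 + d *\<^sub>R v) (sqrt ((1 + 4 * R) * d))"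
proof
  fix x assume x: "x \<in> ball c r \<inter> {x. (x - x0) \<bullet> (- v) \<le> sqrt (d / (6 * R)) * norm (x - x0)}"
  have "dist x0 c + d \<le> r"
    using assms(2,5) by (simp add: ball_subset_ball_iff)
  then have "d \<le> r"
    using zero_le_dist[of x0 c] by linarith
  have "dist x c < r"
    using x by (simp add: dist_commute)
  then have "norm ((x - x0) + (r - d) *\<^sub>R v) < (r - d) + d"
    using internally_tangent_ball_centre[OF assms(1,2,5,6)] by (simp add: dist_norm algebra_simps)
  then have "(norm ((x - x0) - d *\<^sub>R v))\<^sup>2 < (1 + 4 * R) * d"
    using x \<open>d \<le> r\<close> assms(2-4)
    by (intro tangent_ball_cone_near_contact[where s = "r - d", OF assms(1,2)]) auto
  then have "dist x (x0 + d *\<^sub>R v) < sqrt ((1 + 4 * R) * d)"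
    by (simp add: dist_norm real_less_rsqrt algebra_simps)
  then show "x \<in> ball (x0 + d *\<^sub>R v) (sqrt ((1 + 4 * R) * d))"
    by (simp add: dist_commute)
qed

theorem lemma5p3:
  fixes \<Omega> :: "'a::euclidean_space set"
    and R0 \<rho> r0 :: real and x0 v0 :: 'a
  assumes "bounded \<Omega>" and "convex \<Omega>" and "open \<Omega>"
    and "R0 > 0"
    and "\<forall>z\<in>frontier \<Omega>. \<exists>c r. r \<le> R0 \<and> \<Omega> \<subseteq> ball c r \<and> z \<in> sphere c r"
    and "lip_graph_const \<Omega> \<rho>"
    and "r0 > 0"
    and "x0 \<in> \<Omega>"
    and "infdist x0 (frontier \<Omega>) \<le> min (\<rho>^2 / (16 * (1 + 4 * R0))) (min (r0 / 2) (1/4))"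
    and "norm v0 = 1"
    and "x0 + infdist x0 (frontier \<Omega>) *\<^sub>R v0 \<in> frontier \<Omega>"
  shows "let d0 = infdist x0 (frontier \<Omega>);
             xb = x0 + d0 *\<^sub>R v0;
             \<theta> = sqrt (d0 / (6 * R0));
             E = {x \<in> \<Omega>. (x - x0) \<bullet> (- v0) \<le> \<theta> * norm (x - x0)}
         in E \<subseteq> ball xb (sqrt ((1 + 4 * R0) * d0)) \<and>
            ball xb (sqrt ((1 + 4 * R0) * d0)) \<subseteq> ball xb (\<rho> / 4)"
proof -
  define d0 where "d0 = infdist x0 (frontier \<Omega>)"
  define xb where "xb = x0 + d0 *\<^sub>R v0"
  have xb: "xb \<in> frontier \<Omega>"
    using assms(11) by (simp add: xb_def d0_def)
  have "x0 \<notin> frontier \<Omega>"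
    using assms(3,8) by (simp add: frontier_def interior_open)
  then have d0: "0 < d0"
    unfolding d0_def using infdist_pos_not_in_closed[OF frontier_closed] xb by blast
  obtain c r where cr: "r \<le> R0" "\<Omega> \<subseteq> ball c r" "xb \<in> sphere c r"
    using assms(5) xb by blast
  have "ball x0 d0 \<subseteq> ball c r"
    using ball_infdist_frontier_subset[OF assms(8)] cr(2) by (simp add: d0_def)
  from tangent_ball_Int_cone_subset_ball[OF assms(10) d0 _ cr(1) this] cr(2,3) assms(9)
  have "{x \<in> \<Omega>. (x - x0) \<bullet> (- v0) \<le> sqrt (d0 / (6 * R0)) * norm (x - x0)}
          \<subseteq> ball xb (sqrt ((1 + 4 * R0) * d0))"
    by (fastforce simp: xb_def d0_def)
  moreover have "sqrt ((1 + 4 * R0) * d0) \<le> \<rho> / 4"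
  proof (rule real_le_lsqrt)
    show "0 \<le> \<rho> / 4"
      using assms(6) by (simp add: lip_graph_const_def)
    have "(1 + 4 * R0) * d0 \<le> (1 + 4 * R0) * (\<rho>\<^sup>2 / (16 * (1 + 4 * R0)))"
      using assms(4,9) by (intro mult_left_mono) (auto simp: d0_def)
    also have "\<dots> = (\<rho> / 4)\<^sup>2"
      using assms(4) by (simp add: field_simps power2_eq_square)
    finally show "(1 + 4 * R0) * d0 \<le> (\<rho> / 4)\<^sup>2" .
  qed
  ultimately show ?thesis
    unfolding Let_def by (auto simp flip: d0_def xb_def intro: subset_ball)
qed

end
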